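(* For $A$ and $B$ as in the setting, the following decomposition formulae hold: \[ e^{A+B} = e^{dcl_{A}(B)}e^{A} + O(\| B \|^2), \qquad e^{A+B} = e^{A} e^{dcr_{A}(B)} + O(\| B \|^2). \] Additionally, if $A$ satisfies $e^{a_j - a_k} \neq 1$ for all $j \neq k$, the following composition formulae hold: \[ e^{B} e^{A} = e^{A + cml_{A}(B)} + O(\| B \|^2), \qquad e^{A} e^{B} = e^{A + cmr_{A}(B)} + O(\| B \|^2), \] where $\| \cdot \|$ denotes the Frobenius norm.
   Context: Let $A, B \in \mathbb{C}^{m \times m}$ be square complex matrices, with $B$ a (sufficiently small) perturbation. Suppose that $A$ is diagonalizable (not necessarily unitarily diagonalizable), and let $A=\sum_i a_i P_i$ be its spectral decomposition, where $a_i$ are the distinct eigenvalues ($a_i \neq a_j$ if $i\neq j$) and $P_i$ are projections satisfying $P_i P_j = \delta_{ij} P_i$ and $\sum_j P_j = I_m$. Define complex numbers $\ell_{jk}(A) := 1$ if $j=k$ and $\ell_{jk}(A) := (e^{a_j - a_k} -1)/(a_j - a_k)$ if $j\neq k$. For any $X \in \mathbb{C}^{m \times m}$ define the linear maps $dcl_{A}(X) := \sum_{j,k} \ell_{jk}(A) P_j X P_k$, $dcr_{A}(X) := \sum_{j,k} \ell_{kj}(A) P_j X P_k$, $cml_{A}(X) := \sum_{j,k} \frac{1}{\ell_{jk}(A)} P_j X P_k$, $cmr_{A}(X) := \sum_{j,k} \frac{1}{\ell_{kj}(A)} P_j X P_k$. *)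

theory Defs
  imports "HOL-Analysis.Analysis"
begin

text \<open>Square complex matrices of size m are modelled as complex^'m^'m (HOL-Analysis),
  with matrix product (**), identity (mat 1); the norm on this type is the
  Euclidean norm of all entries, i.e. the Frobenius norm.\<close>

definition cscale :: "complex \<Rightarrow> complex^'m^'n \<Rightarrow> complex^'m^'n" where
  "cscale c M = (\<chi> i j. c * M $ i $ j)"

definition mexp :: "complex^'m^'m \<Rightarrow> complex^'m^'m" where
  "mexp M = (\<Sum>k. (1 / fact k) *\<^sub>R (((**) M) ^^ k) (mat 1))"

text \<open>The spectral data: eigenvalues a j and projections P j, for j < n.\<close>
definition ell :: "(nat \<Rightarrow> complex) \<Rightarrow> nat \<Rightarrow> nat \<Rightarrow> complex" where
  "ell a j k = (if j = k then 1 else (exp (a j - a k) - 1) / (a j - a k))"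

definition dcl :: "nat \<Rightarrow> (nat \<Rightarrow> complex) \<Rightarrow> (nat \<Rightarrow> complex^'m^'m) \<Rightarrow> complex^'m^'m \<Rightarrow> complex^'m^'m" where
  "dcl n a P X = (\<Sum>j<n. \<Sum>k<n. cscale (ell a j k) (P j ** X ** P k))"

definition dcr :: "nat \<Rightarrow> (nat \<Rightarrow> complex) \<Rightarrow> (nat \<Rightarrow> complex^'m^'m) \<Rightarrow> complex^'m^'m \<Rightarrow> complex^'m^'m" where
  "dcr n a P X = (\<Sum>j<n. \<Sum>k<n. cscale (ell a k j) (P j ** X ** P k))"

definition cml :: "nat \<Rightarrow> (nat \<Rightarrow> complex) \<Rightarrow> (nat \<Rightarrow> complex^'m^'m) \<Rightarrow> complex^'m^'m \<Rightarrow> complex^'m^'m" where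
  "cml n a P X = (\<Sum>j<n. \<Sum>k<n. cscale (1 / ell a j k) (P j ** X ** P k))"

definition cmr :: "nat \<Rightarrow> (nat \<Rightarrow> complex) \<Rightarrow> (nat \<Rightarrow> complex^'m^'m) \<Rightarrow> complex^'m^'m \<Rightarrow> complex^'m^'m" where
  "cmr n a P X = (\<Sum>j<n. \<Sum>k<n. cscale (1 / ell a k j) (P j ** X ** P k))"

definition bigO_sq :: "(complex^'m^'m \<Rightarrow> complex^'m^'m) \<Rightarrow> bool" where
  "bigO_sq f \<longleftrightarrow> (\<exists>C \<delta>. \<delta> > 0 \<and> (\<forall>B. norm B < \<delta> \<longrightarrow> norm (f B) \<le> C * (norm B)\<^sup>2))"

end

theory Submission
  imports Defs
begin

text \<open>
  Summing the first-order expansions of the powers \<open>(A + X)^k\<close> gives, for every matrix \<open>A\<close>,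
  \<open>e^(A+X) = e^A + D X + O(\<parallel>X\<parallel>\<^sup>2)\<close> with \<open>D X = \<Sum>\<^sub>k (1/k!) \<Sum>\<^sub>i\<^sub><\<^sub>k A^i X A^(k-1-i)\<close>.
  If \<open>A = \<Sum>\<^sub>j a\<^sub>j P\<^sub>j\<close>, then \<open>P\<^sub>j (D X) P\<^sub>k\<close> is \<open>P\<^sub>j X P\<^sub>k\<close> times the divided difference
  \<open>(e^a\<^sub>j - e^a\<^sub>k) / (a\<^sub>j - a\<^sub>k) = ell\<^sub>j\<^sub>k e^a\<^sub>k = e^a\<^sub>j ell\<^sub>k\<^sub>j\<close>, i.e. \<open>D X = dcl(X) e^A = e^A dcr(X)\<close>.
  Combined with \<open>e^Y = 1 + Y + O(\<parallel>Y\<parallel>\<^sup>2)\<close> for \<open>Y = dcl(B)\<close> or \<open>Y = dcr(B)\<close>, this gives the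
  decomposition formulae. When no \<open>ell\<^sub>j\<^sub>k\<close> vanishes, \<open>cml\<close> and \<open>cmr\<close> invert \<open>dcl\<close> and \<open>dcr\<close>,
  and the same two expansions give the composition formulae.
\<close>

section \<open>The Frobenius norm is submultiplicative\<close>

lemma power2_norm_vec: "(norm x)\<^sup>2 = (\<Sum>i\<in>UNIV. (norm (x $ i))\<^sup>2)"
  unfolding norm_vec_def L2_set_def by (simp add: sum_nonneg)

lemma norm_matrix_mult_entry_le:
  fixes X :: "'a::real_normed_div_algebra^'n::finite^'m" and Y :: "'a^'p^'n"
  shows "norm ((X ** Y) $ i $ j) \<le> norm (X $ i) * norm (column j Y)"
proof -
  have "norm ((X ** Y) $ i $ j) \<le> (\<Sum>k\<in>UNIV. norm (X $ i $ k) * norm (Y $ k $ j))"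
    unfolding matrix_matrix_mult_def by (simp add: order_trans[OF norm_sum] norm_mult)
  also have "\<dots> \<le> L2_set (\<lambda>k. norm (X $ i $ k)) UNIV * L2_set (\<lambda>k. norm (Y $ k $ j)) UNIV"
    using L2_set_mult_ineq[of "\<lambda>k. norm (X $ i $ k)" "\<lambda>k. norm (Y $ k $ j)"] by simp
  finally show ?thesis by (simp add: norm_vec_def column_def)
qed

lemma power2_norm_columns: "(\<Sum>j\<in>UNIV. (norm (column j Y))\<^sup>2) = (norm Y)\<^sup>2"
proof -
  have "(\<Sum>j\<in>UNIV. (norm (column j Y))\<^sup>2) = (\<Sum>j\<in>UNIV. \<Sum>k\<in>UNIV. (norm (Y $ k $ j))\<^sup>2)"
    by (simp add: power2_norm_vec column_def)
  also have "\<dots> = (norm Y)\<^sup>2"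
    unfolding power2_norm_vec[of Y] power2_norm_vec[of "Y $ k" for k] by (rule sum.swap)
  finally show ?thesis .
qed

lemma norm_matrix_mult_le:
  fixes X :: "'a::real_normed_div_algebra^'n::finite^'m" and Y :: "'a^'p^'n"
  shows "norm (X ** Y) \<le> norm X * norm Y"
proof -
  have "(norm (X ** Y))\<^sup>2 = (\<Sum>i\<in>UNIV. \<Sum>j\<in>UNIV. (norm ((X ** Y) $ i $ j))\<^sup>2)"
    by (simp only: power2_norm_vec)
  also have "\<dots> \<le> (\<Sum>i\<in>UNIV. \<Sum>j\<in>UNIV. (norm (X $ i))\<^sup>2 * (norm (column j Y))\<^sup>2)"
  proof (intro sum_mono)
    fix i j
    have "(norm ((X ** Y) $ i $ j))\<^sup>2 \<le> (norm (X $ i) * norm (column j Y))\<^sup>2"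
      by (rule power_mono[OF norm_matrix_mult_entry_le norm_ge_zero])
    then show "(norm ((X ** Y) $ i $ j))\<^sup>2 \<le> (norm (X $ i))\<^sup>2 * (norm (column j Y))\<^sup>2"
      by (simp only: power_mult_distrib)
  qed
  also have "\<dots> = (norm X * norm Y)\<^sup>2"
    by (simp only: power2_norm_vec[of X] power2_norm_columns[of Y, symmetric] sum_product power_mult_distrib)
  finally show ?thesis
    by (rule power2_le_imp_le) simp
qed

lemma bounded_bilinear_matrix_mult:
  "bounded_bilinear ((**) :: 'a::real_normed_field^'n::finite^'m \<Rightarrow> 'a^'p^'n \<Rightarrow> 'a^'p^'m)"
proof
  fix X X' :: "'a^'n^'m" and Y Y' :: "'a^'p^'n" and r :: real
  show "(X + X') ** Y = X ** Y + X' ** Y"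
    by (simp add: matrix_matrix_mult_def vec_eq_iff sum.distrib distrib_right)
  show "X ** (Y + Y') = X ** Y + X ** Y'"
    by (rule matrix_add_ldistrib)
  show "(r *\<^sub>R X) ** Y = r *\<^sub>R (X ** Y)" "X ** (r *\<^sub>R Y) = r *\<^sub>R (X ** Y)"
    by (simp_all add: matrix_matrix_mult_def vec_eq_iff scaleR_sum_right)
  show "\<exists>K. \<forall>X Y. norm ((X::'a^'n^'m) ** (Y::'a^'p^'n)) \<le> norm X * norm Y * K"
    by (rule exI[of _ 1]) (simp add: norm_matrix_mult_le)
qed

lemmas matrix_mult_distribs =
  bounded_bilinear.add_left[OF bounded_bilinear_matrix_mult]
  bounded_bilinear.add_right[OF bounded_bilinear_matrix_mult]
  bounded_bilinear.diff_left[OF bounded_bilinear_matrix_mult]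
  bounded_bilinear.diff_right[OF bounded_bilinear_matrix_mult]

lemmas matrix_mult_sum_left = bounded_bilinear.sum_left[OF bounded_bilinear_matrix_mult]
lemmas matrix_mult_sum_right = bounded_bilinear.sum_right[OF bounded_bilinear_matrix_mult]

lemma norm_cscale: "norm (cscale c M) = cmod c * norm M"
proof -
  have "norm (cscale c M $ i) = cmod c * norm (M $ i)" for i
    by (simp add: norm_vec_def cscale_def L2_set_right_distrib norm_mult)
  then show ?thesis
    by (simp add: norm_vec_def[of "cscale c M"] norm_vec_def[of M] L2_set_right_distrib)
qed

lemma cscale_one [simp]: "cscale 1 M = M"
  by (simp add: cscale_def vec_eq_iff)

lemma cscale_zero_left [simp]: "cscale 0 M = 0"
  by (simp add: cscale_def vec_eq_iff)

lemma cscale_zero_right [simp]: "cscale c 0 = 0"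
  by (simp add: cscale_def vec_eq_iff)

lemma cscale_cscale: "cscale c (cscale d M) = cscale (c * d) M"
  by (simp add: cscale_def vec_eq_iff mult.assoc)

lemma cscale_add_left: "cscale (c + d) M = cscale c M + cscale d M"
  by (simp add: cscale_def vec_eq_iff distrib_right)

lemma scaleR_cscale: "r *\<^sub>R cscale c M = cscale (r *\<^sub>R c) M"
  by (simp add: cscale_def vec_eq_iff scaleR_conv_of_real[where 'a=complex])

lemma cscale_matrix_mult_left: "cscale c X ** Y = cscale c (X ** Y)"
  by (simp add: cscale_def matrix_matrix_mult_def vec_eq_iff sum_distrib_left mult.assoc)

lemma cscale_matrix_mult_right: "X ** cscale c Y = cscale c (X ** Y)"
  by (simp add: cscale_def matrix_matrix_mult_def vec_eq_iff sum_distrib_left mult.left_commute)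

lemma bounded_linear_cscale_left: "bounded_linear (\<lambda>c. cscale c M)"
  by (rule bounded_linear_intro[of _ "norm M"])
    (simp_all add: cscale_add_left scaleR_cscale norm_cscale)

lemma bounded_linear_cscale_right: "bounded_linear (cscale c)"
proof (rule bounded_linear_intro[of _ "cmod c"])
  show "cscale c (M + N) = cscale c M + cscale c N" for M N
    by (simp add: cscale_def vec_eq_iff distrib_left)
  show "cscale c (r *\<^sub>R M) = r *\<^sub>R cscale c M" for r M
    by (simp add: cscale_def vec_eq_iff scaleR_conv_of_real[where 'a=complex] mult.left_commute)
  show "norm (cscale c M) \<le> norm M * cmod c" for M
    by (simp add: norm_cscale)
qed

section \<open>Matrix powers and their first-order expansion\<close>

definition matpow :: "complex^'n::finite^'n \<Rightarrow> nat \<Rightarrow> complex^'n^'n" where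
  "matpow M k = ((**) M ^^ k) (mat 1)"

lemma matpow_0 [simp]: "matpow M 0 = mat 1"
  by (simp add: matpow_def)

lemma matpow_Suc [simp]: "matpow M (Suc k) = M ** matpow M k"
  by (simp add: matpow_def)

lemma norm_matpow_le:
  fixes M :: "complex^'n::finite^'n"
  shows "norm (matpow M k) \<le> norm (mat 1 :: complex^'n^'n) * norm M ^ k"
proof (induction k)
  case (Suc k)
  have "norm (matpow M (Suc k)) \<le> norm M * norm (matpow M k)"
    by (simp add: norm_matrix_mult_le)
  also have "\<dots> \<le> norm M * (norm (mat 1 :: complex^'n^'n) * norm M ^ k)"
    by (simp add: Suc mult_left_mono)
  finally show ?case
    by (simp add: ac_simps)
qed simp

lemma summable_pow_mult_exp_series: "summable (\<lambda>k. real k ^ p * b ^ k / fact k)"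
proof (rule summable_comparison_test')
  show "summable (\<lambda>k. inverse (fact k) * (2 ^ p * \<bar>b\<bar>) ^ k)"
    by (rule summable_exp)
  fix k :: nat
  have "real k ^ p \<le> (2 ^ k) ^ p"
    using of_nat_less_two_power[of k, where 'a=real] by (intro power_mono) auto
  also have "\<dots> = (2 ^ p) ^ k"
    by (simp flip: power_mult add: mult.commute)
  finally have "real k ^ p * \<bar>b\<bar> ^ k \<le> (2 ^ p * \<bar>b\<bar>) ^ k"
    by (simp add: mult_right_mono power_mult_distrib)
  then show "norm (real k ^ p * b ^ k / fact k) \<le> inverse (fact k) * (2 ^ p * \<bar>b\<bar>) ^ k"
    by (simp add: abs_mult power_abs divide_inverse mult.commute mult_left_mono)
qed

lemma mexp_sums:
  fixes M :: "complex^'n::finite^'n"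
  shows "(\<lambda>k. (1 / fact k) *\<^sub>R matpow M k) sums mexp M"
proof -
  have "summable (\<lambda>k. (1 / fact k) *\<^sub>R matpow M k)"
  proof (rule summable_comparison_test')
    show "summable (\<lambda>k. norm (mat 1 :: complex^'n^'n) * (inverse (fact k) * norm M ^ k))"
      by (intro summable_mult summable_exp)
    show "norm ((1 / fact k) *\<^sub>R matpow M k) \<le> norm (mat 1 :: complex^'n^'n) * (inverse (fact k) * norm M ^ k)" for k
      using divide_right_mono[OF norm_matpow_le[of M k], of "fact k"] by (simp add: divide_inverse ac_simps)
  qed
  then show ?thesis
    by (simp add: mexp_def summable_sums flip: matpow_def)
qed

text \<open>\<open>matpow_deriv A X k = \<Sum>\<^sub>i\<^sub><\<^sub>k A^i X A^(k-1-i)\<close>, the derivative of \<open>M \<mapsto> M^k\<close> at \<open>A\<close> in direction \<open>X\<close>.\<close>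

fun matpow_deriv :: "complex^'n::finite^'n \<Rightarrow> complex^'n^'n \<Rightarrow> nat \<Rightarrow> complex^'n^'n" where
  "matpow_deriv A X 0 = 0"
| "matpow_deriv A X (Suc k) = X ** matpow A k + A ** matpow_deriv A X k"

definition mexp_deriv :: "complex^'n::finite^'n \<Rightarrow> complex^'n^'n \<Rightarrow> complex^'n^'n" where
  "mexp_deriv A X = (\<Sum>k. (1 / fact k) *\<^sub>R matpow_deriv A X k)"

lemma norm_matpow_deriv_le:
  fixes A X :: "complex^'n::finite^'n"
  shows "norm (matpow_deriv A X k) \<le> norm (mat 1 :: complex^'n^'n) * real k * (norm A + 1) ^ k * norm X"
proof (induction k)
  case (Suc k)
  let ?c = "norm (mat 1 :: complex^'n^'n)" and ?b = "norm A + 1"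
  have "norm (matpow_deriv A X (Suc k)) \<le> norm X * norm (matpow A k) + norm A * norm (matpow_deriv A X k)"
    by (simp add: norm_triangle_le add_mono norm_matrix_mult_le)
  also have "\<dots> \<le> norm X * (?c * ?b ^ Suc k) + ?b * (?c * real k * ?b ^ k * norm X)"
  proof (intro add_mono mult_mono)
    have "norm A ^ k \<le> ?b ^ k"
      by (simp add: power_mono)
    also have "\<dots> \<le> ?b ^ Suc k"
      by (rule power_increasing) simp_all
    finally show "norm (matpow A k) \<le> ?c * ?b ^ Suc k"
      using norm_matpow_le[of A k] by (meson mult_left_mono norm_ge_zero order_trans)
  qed (use Suc in auto)
  also have "\<dots> = ?c * real (Suc k) * ?b ^ Suc k * norm X"
    by (simp add: algebra_simps)
  finally show ?case .
qed simp

lemma matpow_remainder_Suc: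
  "matpow (A + X) (Suc k) - matpow A (Suc k) - matpow_deriv A X (Suc k)
     = (A + X) ** (matpow (A + X) k - matpow A k - matpow_deriv A X k) + X ** matpow_deriv A X k"
  by (simp add: matrix_mult_distribs algebra_simps)

lemma norm_matpow_remainder_le:
  fixes A X :: "complex^'n::finite^'n"
  shows "norm (matpow (A + X) k - matpow A k - matpow_deriv A X k)
    \<le> norm (mat 1 :: complex^'n^'n) * (real k)\<^sup>2 * (norm A + norm X + 1) ^ k * (norm X)\<^sup>2"
proof (induction k)
  case (Suc k)
  let ?c = "norm (mat 1 :: complex^'n^'n)" and ?b = "norm A + norm X + 1"
  have AX: "norm (A + X) \<le> ?b"
    using norm_triangle_ineq[of A X] by simp
  have D: "norm (matpow_deriv A X k) \<le> ?c * real k * ?b ^ k * norm X"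
    using norm_matpow_deriv_le[of A X k]
    by (rule order_trans) (intro mult_right_mono mult_left_mono power_mono, auto)
  have "norm (matpow (A + X) (Suc k) - matpow A (Suc k) - matpow_deriv A X (Suc k))
      \<le> norm (A + X) * norm (matpow (A + X) k - matpow A k - matpow_deriv A X k)
        + norm X * norm (matpow_deriv A X k)"
    unfolding matpow_remainder_Suc by (simp add: norm_triangle_le add_mono norm_matrix_mult_le)
  also have "\<dots> \<le> ?b * (?c * (real k)\<^sup>2 * ?b ^ k * (norm X)\<^sup>2) + norm X * (?c * real k * ?b ^ k * norm X)"
    using Suc D AX by (intro add_mono mult_mono mult_left_mono) auto
  also have "\<dots> = (?c * ?b ^ k * (norm X)\<^sup>2) * ((real k)\<^sup>2 * ?b + real k)"
    by (simp add: algebra_simps power2_eq_square)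
  also have "\<dots> \<le> (?c * ?b ^ k * (norm X)\<^sup>2) * ((real (Suc k))\<^sup>2 * ?b)"
  proof (rule mult_left_mono)
    have "real k \<le> real k * ?b"
      by (simp add: mult_le_cancel_left1)
    then show "(real k)\<^sup>2 * ?b + real k \<le> (real (Suc k))\<^sup>2 * ?b"
      by (simp add: power2_eq_square algebra_simps)
  qed simp
  also have "\<dots> = ?c * (real (Suc k))\<^sup>2 * ?b ^ Suc k * (norm X)\<^sup>2"
    by (simp add: ac_simps)
  finally show ?case .
qed simp

lemma mexp_deriv_sums:
  fixes A X :: "complex^'n::finite^'n"
  shows "(\<lambda>k. (1 / fact k) *\<^sub>R matpow_deriv A X k) sums mexp_deriv A X"
proof -
  let ?c = "norm (mat 1 :: complex^'n^'n)"
  have "summable (\<lambda>k. (1 / fact k) *\<^sub>R matpow_deriv A X k)"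
  proof (rule summable_comparison_test')
    show "summable (\<lambda>k. ?c * norm X * (real k ^ 1 * (norm A + 1) ^ k / fact k))"
      by (intro summable_mult summable_pow_mult_exp_series)
    show "norm ((1 / fact k) *\<^sub>R matpow_deriv A X k) \<le> ?c * norm X * (real k ^ 1 * (norm A + 1) ^ k / fact k)" for k
      using divide_right_mono[OF norm_matpow_deriv_le[of A X k], of "fact k"] by (simp add: ac_simps)
  qed
  then show ?thesis
    by (simp add: mexp_deriv_def summable_sums)
qed

lemma bigO_sqI:
  assumes "\<delta> > 0" and "\<And>B. norm B < \<delta> \<Longrightarrow> norm (f B) \<le> C * (norm B)\<^sup>2"
  shows "bigO_sq f"
  using assms unfolding bigO_sq_def by blast

lemma bigO_sqE:
  assumes "bigO_sq f"
  obtains C \<delta> where "\<delta> > 0" and "\<And>B. norm B < \<delta> \<Longrightarrow> norm (f B) \<le> C * (norm B)\<^sup>2"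
  using assms unfolding bigO_sq_def by blast

lemma bigO_sq_diff:
  fixes f g :: "complex^'n::finite^'n \<Rightarrow> complex^'n^'n"
  assumes "bigO_sq f" and "bigO_sq g"
  shows "bigO_sq (\<lambda>B. f B - g B)"
proof -
  obtain C \<delta> where \<delta>: "\<delta> > 0" and f: "\<And>B. norm B < \<delta> \<Longrightarrow> norm (f B) \<le> C * (norm B)\<^sup>2"
    using assms(1) by (blast elim!: bigO_sqE)
  obtain D \<epsilon> where \<epsilon>: "\<epsilon> > 0" and g: "\<And>B. norm B < \<epsilon> \<Longrightarrow> norm (g B) \<le> D * (norm B)\<^sup>2"
    using assms(2) by (blast elim!: bigO_sqE)
  show ?thesis
  proof (rule bigO_sqI[of "min \<delta> \<epsilon>"])
    fix B :: "complex^'n^'n" assume "norm B < min \<delta> \<epsilon>"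
    then have "norm (f B) + norm (g B) \<le> (C + D) * (norm B)\<^sup>2"
      using f g by (simp add: distrib_right add_mono)
    then show "norm (f B - g B) \<le> (C + D) * (norm B)\<^sup>2"
      by (rule order_trans[OF norm_triangle_ineq4])
  qed (use \<delta> \<epsilon> in simp)
qed

lemma bigO_sq_matrix_mult_left:
  fixes f :: "complex^'n::finite^'n \<Rightarrow> complex^'n^'n"
  assumes "bigO_sq f"
  shows "bigO_sq (\<lambda>B. M ** f B)"
proof -
  obtain C \<delta> where \<delta>: "\<delta> > 0" and f: "\<And>B. norm B < \<delta> \<Longrightarrow> norm (f B) \<le> C * (norm B)\<^sup>2"
    using assms by (blast elim!: bigO_sqE)
  show ?thesis
  proof (rule bigO_sqI[OF \<delta>])
    fix B :: "complex^'n^'n" assume "norm B < \<delta>"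
    then have fB: "norm (f B) \<le> C * (norm B)\<^sup>2"
      by (rule f)
    have "norm (M ** f B) \<le> norm M * norm (f B)"
      by (rule norm_matrix_mult_le)
    also have "\<dots> \<le> norm M * (C * (norm B)\<^sup>2)"
      using fB by (rule mult_left_mono) simp
    finally show "norm (M ** f B) \<le> (norm M * C) * (norm B)\<^sup>2"
      by (simp only: mult.assoc)
  qed
qed

lemma bigO_sq_matrix_mult_right:
  fixes f :: "complex^'n::finite^'n \<Rightarrow> complex^'n^'n"
  assumes "bigO_sq f"
  shows "bigO_sq (\<lambda>B. f B ** M)"
proof -
  obtain C \<delta> where \<delta>: "\<delta> > 0" and f: "\<And>B. norm B < \<delta> \<Longrightarrow> norm (f B) \<le> C * (norm B)\<^sup>2"
    using assms by (blast elim!: bigO_sqE)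
  show ?thesis
  proof (rule bigO_sqI[OF \<delta>])
    fix B :: "complex^'n^'n" assume "norm B < \<delta>"
    then have fB: "norm (f B) \<le> C * (norm B)\<^sup>2"
      by (rule f)
    have "norm (f B ** M) \<le> norm (f B) * norm M"
      by (rule norm_matrix_mult_le)
    also have "\<dots> \<le> (C * (norm B)\<^sup>2) * norm M"
      using fB by (rule mult_right_mono) simp
    finally show "norm (f B ** M) \<le> (norm M * C) * (norm B)\<^sup>2"
      by (simp only: ac_simps)
  qed
qed

lemma bigO_sq_compose_bounded_linear:
  fixes f T :: "complex^'n::finite^'n \<Rightarrow> complex^'n^'n"
  assumes "bigO_sq f" and "bounded_linear T"
  shows "bigO_sq (\<lambda>B. f (T B))"
proof -
  obtain C \<delta> where \<delta>: "\<delta> > 0" and f: "\<And>B. norm B < \<delta> \<Longrightarrow> norm (f B) \<le> C * (norm B)\<^sup>2"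
    using assms(1) by (blast elim!: bigO_sqE)
  obtain K where K: "K > 0" and T: "\<And>B. norm (T B) \<le> norm B * K"
    using bounded_linear.pos_bounded[OF assms(2)] by blast
  show ?thesis
  proof (rule bigO_sqI[of "\<delta> / K"])
    fix B :: "complex^'n^'n" assume "norm B < \<delta> / K"
    then have "norm (T B) < \<delta>"
      using T[of B] K by (simp add: pos_less_divide_eq)
    then have "norm (f (T B)) \<le> C * (norm (T B))\<^sup>2"
      by (rule f)
    also have "\<dots> \<le> \<bar>C\<bar> * (norm (T B))\<^sup>2"
      by (rule mult_right_mono) simp_all
    also have "\<dots> \<le> \<bar>C\<bar> * (norm B * K)\<^sup>2"
      using T by (intro mult_left_mono power_mono) auto
    finally show "norm (f (T B)) \<le> (\<bar>C\<bar> * K\<^sup>2) * (norm B)\<^sup>2"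
      by (simp add: power_mult_distrib ac_simps)
  qed (use \<delta> K in simp)
qed

section \<open>Second-order expansion of the matrix exponential\<close>

lemma bigO_sq_mexp_remainder:
  fixes A :: "complex^'n::finite^'n"
  shows "bigO_sq (\<lambda>X. mexp (A + X) - mexp A - mexp_deriv A X)"
proof -
  let ?c = "norm (mat 1 :: complex^'n^'n)"
  define h where "h k = (real k)\<^sup>2 * (norm A + 2) ^ k / fact k" for k
  have h: "summable h"
    unfolding h_def by (rule summable_pow_mult_exp_series)
  have "norm (mexp (A + X) - mexp A - mexp_deriv A X) \<le> (?c * suminf h) * (norm X)\<^sup>2"
    if X: "norm X < 1" for X :: "complex^'n^'n"
  proof -
    let ?R = "\<lambda>k. matpow (A + X) k - matpow A k - matpow_deriv A X k"
    have "(\<lambda>k. (1 / fact k) *\<^sub>R ?R k) sums (mexp (A + X) - mexp A - mexp_deriv A X)"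
      using sums_diff[OF sums_diff[OF mexp_sums mexp_sums] mexp_deriv_sums]
      by (simp add: scaleR_diff_right)
    then have "norm (mexp (A + X) - mexp A - mexp_deriv A X) = norm (\<Sum>k. (1 / fact k) *\<^sub>R ?R k)"
      by (simp add: sums_iff)
    also have "\<dots> \<le> (\<Sum>k. ?c * (norm X)\<^sup>2 * h k)"
    proof (rule norm_suminf_le)
      fix k
      have "norm (?R k) \<le> ?c * (real k)\<^sup>2 * (norm A + norm X + 1) ^ k * (norm X)\<^sup>2"
        by (rule norm_matpow_remainder_le)
      also have "\<dots> \<le> ?c * (real k)\<^sup>2 * (norm A + 2) ^ k * (norm X)\<^sup>2"
        using X by (intro mult_left_mono mult_right_mono power_mono) auto
      finally show "norm ((1 / fact k) *\<^sub>R ?R k) \<le> ?c * (norm X)\<^sup>2 * h k"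
        using divide_right_mono[of _ _ "fact k"] by (simp add: h_def ac_simps)
    qed (intro summable_mult h)
    also have "\<dots> = (?c * suminf h) * (norm X)\<^sup>2"
      using suminf_mult[OF h, of "?c * (norm X)\<^sup>2"] by (simp add: ac_simps)
    finally show ?thesis .
  qed
  then show ?thesis
    by (intro bigO_sqI[of 1]) simp_all
qed

lemma matpow_zero: "matpow 0 k = (if k = 0 then mat 1 else 0)"
  by (cases k) simp_all

lemma mexp_zero: "mexp 0 = (mat 1 :: complex^'n::finite^'n)"
proof -
  have series: "(\<lambda>k. (1 / fact k) *\<^sub>R matpow 0 k) = (\<lambda>k. if k = 0 then mat 1 else 0 :: complex^'n^'n)"
    by (simp add: fun_eq_iff matpow_zero)
  show ?thesis
    using mexp_sums[of "0 :: complex^'n^'n", unfolded series]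
    by (rule sums_unique2[OF _ sums_single[of 0 "\<lambda>_. mat 1"]])
qed

lemma mexp_deriv_zero:
  fixes X :: "complex^'n::finite^'n"
  shows "mexp_deriv 0 X = X"
proof -
  have "matpow_deriv 0 X k = (if k = 1 then X else 0)" for k
    by (cases k) (simp_all add: matpow_zero)
  then have series: "(\<lambda>k. (1 / fact k) *\<^sub>R matpow_deriv 0 X k) = (\<lambda>k. if k = 1 then X else 0)"
    by (simp add: fun_eq_iff)
  show ?thesis
    using mexp_deriv_sums[of 0 X, unfolded series]
    by (rule sums_unique2[OF _ sums_single[of 1 "\<lambda>_. X"]])
qed

lemma bigO_sq_mexp_sub_linear: "bigO_sq (\<lambda>X. mexp X - mat 1 - X)"
  using bigO_sq_mexp_remainder[of 0] by (simp add: mexp_zero mexp_deriv_zero)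

lemma bigO_sq_mexp_add_decompose_left:
  fixes A :: "complex^'n::finite^'n"
  assumes T: "bounded_linear T" and deriv: "\<And>X. mexp_deriv A X = T X ** mexp A"
  shows "bigO_sq (\<lambda>B. mexp (A + B) - mexp (T B) ** mexp A)"
proof -
  have "bigO_sq (\<lambda>B. (mexp (A + B) - mexp A - mexp_deriv A B) - (mexp (T B) - mat 1 - T B) ** mexp A)"
    by (intro bigO_sq_diff bigO_sq_mexp_remainder bigO_sq_matrix_mult_right
        bigO_sq_compose_bounded_linear[OF bigO_sq_mexp_sub_linear T])
  then show ?thesis
    by (simp add: deriv matrix_mult_distribs)
qed

lemma bigO_sq_mexp_add_decompose_right:
  fixes A :: "complex^'n::finite^'n"
  assumes T: "bounded_linear T" and deriv: "\<And>X. mexp_deriv A X = mexp A ** T X"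
  shows "bigO_sq (\<lambda>B. mexp (A + B) - mexp A ** mexp (T B))"
proof -
  have "bigO_sq (\<lambda>B. (mexp (A + B) - mexp A - mexp_deriv A B) - mexp A ** (mexp (T B) - mat 1 - T B))"
    by (intro bigO_sq_diff bigO_sq_mexp_remainder bigO_sq_matrix_mult_left
        bigO_sq_compose_bounded_linear[OF bigO_sq_mexp_sub_linear T])
  then show ?thesis
    by (simp add: deriv matrix_mult_distribs)
qed

lemma bigO_sq_mexp_mult_compose_left:
  fixes A :: "complex^'n::finite^'n"
  assumes T: "bounded_linear T" and deriv: "\<And>X. mexp_deriv A (T X) = X ** mexp A"
  shows "bigO_sq (\<lambda>B. mexp B ** mexp A - mexp (A + T B))"
proof -
  have "bigO_sq (\<lambda>B. (mexp B - mat 1 - B) ** mexp A - (mexp (A + T B) - mexp A - mexp_deriv A (T B)))"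
    by (intro bigO_sq_diff bigO_sq_matrix_mult_right bigO_sq_mexp_sub_linear
        bigO_sq_compose_bounded_linear[OF bigO_sq_mexp_remainder T])
  then show ?thesis
    by (simp add: deriv matrix_mult_distribs)
qed

lemma bigO_sq_mexp_mult_compose_right:
  fixes A :: "complex^'n::finite^'n"
  assumes T: "bounded_linear T" and deriv: "\<And>X. mexp_deriv A (T X) = mexp A ** X"
  shows "bigO_sq (\<lambda>B. mexp A ** mexp B - mexp (A + T B))"
proof -
  have "bigO_sq (\<lambda>B. mexp A ** (mexp B - mat 1 - B) - (mexp (A + T B) - mexp A - mexp_deriv A (T B)))"
    by (intro bigO_sq_diff bigO_sq_matrix_mult_left bigO_sq_mexp_sub_linear
        bigO_sq_compose_bounded_linear[OF bigO_sq_mexp_remainder T])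
  then show ?thesis
    by (simp add: deriv matrix_mult_distribs)
qed

section \<open>Divided differences of powers and of the exponential\<close>

fun pow_divdiff :: "nat \<Rightarrow> 'a::comm_ring_1 \<Rightarrow> 'a \<Rightarrow> 'a" where
  "pow_divdiff 0 u v = 0"
| "pow_divdiff (Suc k) u v = v ^ k + u * pow_divdiff k u v"

lemma diff_mult_pow_divdiff: "(u - v) * pow_divdiff k u v = u ^ k - v ^ k"
proof (induction k)
  case (Suc k)
  have "(u - v) * pow_divdiff (Suc k) u v = (u - v) * v ^ k + u * ((u - v) * pow_divdiff k u v)"
    by (simp add: algebra_simps)
  also have "\<dots> = u ^ Suc k - v ^ Suc k"
    by (simp only: Suc) (simp add: algebra_simps)
  finally show ?case .
qed simp

lemma pow_divdiff_same: "pow_divdiff (Suc k) u u = of_nat (Suc k) * u ^ k"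
  by (induction k) (simp_all add: algebra_simps)

definition exp_divdiff :: "'a::{real_normed_field,banach} \<Rightarrow> 'a \<Rightarrow> 'a" where
  "exp_divdiff u v = (if u = v then exp u else (exp u - exp v) / (u - v))"

lemma pow_divdiff_sums: "(\<lambda>k. (1 / fact k) *\<^sub>R pow_divdiff k u v) sums exp_divdiff u v"
proof (cases "u = v")
  case True
  have shift: "(\<lambda>k. (1 / fact (Suc k)) *\<^sub>R pow_divdiff (Suc k) u u) = (\<lambda>k. u ^ k /\<^sub>R fact k)"
    by (simp add: fun_eq_iff pow_divdiff_same scaleR_conv_of_real divide_inverse mult.commute
        del: pow_divdiff.simps of_nat_Suc)
  have "(\<lambda>k. (1 / fact (Suc k)) *\<^sub>R pow_divdiff (Suc k) u u) sums exp u"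
    unfolding shift by (rule exp_converges)
  then show ?thesis
    using True by (subst (asm) sums_Suc_iff) (simp add: exp_divdiff_def)
next
  case False
  have "(\<lambda>k. (u ^ k /\<^sub>R fact k - v ^ k /\<^sub>R fact k) / (u - v)) sums ((exp u - exp v) / (u - v))"
    by (intro sums_divide sums_diff exp_converges)
  moreover have "(u ^ k /\<^sub>R fact k - v ^ k /\<^sub>R fact k) / (u - v) = (1 / fact k) *\<^sub>R pow_divdiff k u v" for k
  proof -
    have "u ^ k /\<^sub>R fact k - v ^ k /\<^sub>R fact k = (u - v) * ((1 / fact k) *\<^sub>R pow_divdiff k u v)"
      by (simp add: diff_mult_pow_divdiff divide_inverse flip: scaleR_diff_right)
    then show ?thesis
      using False by (simp only: nonzero_mult_div_cancel_left right_minus_eq not_False_eq_True)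
  qed
  ultimately show ?thesis
    using False by (simp add: exp_divdiff_def)
qed

lemma exp_divdiff_eq_left: "exp_divdiff u v = (if u = v then 1 else (exp (u - v) - 1) / (u - v)) * exp v"
proof (cases "u = v")
  case False
  have "exp (u - v) * exp v = exp u"
    by (simp add: exp_diff)
  then show ?thesis
    using False by (simp add: exp_divdiff_def times_divide_eq_left left_diff_distrib)
qed (simp add: exp_divdiff_def)

lemma exp_divdiff_eq_right: "exp_divdiff u v = exp u * (if v = u then 1 else (exp (v - u) - 1) / (v - u))"
proof (cases "u = v")
  case False
  have "exp u * exp (v - u) = exp v"
    by (simp add: exp_diff)
  then have "exp u * ((exp (v - u) - 1) / (v - u)) = (exp v - exp u) / (v - u)"
    by (simp add: times_divide_eq_right right_diff_distrib)
  also have "\<dots> = (exp u - exp v) / (u - v)"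
    by (rule minus_divide_divide[of "exp u - exp v" "u - v", simplified])
  finally show ?thesis
    using False by (simp add: exp_divdiff_def)
qed (simp add: exp_divdiff_def)

section \<open>Functional calculus and Schur multipliers of a resolution of the identity\<close>

definition spectral_sum :: "nat \<Rightarrow> (nat \<Rightarrow> complex^'n::finite^'n) \<Rightarrow> (nat \<Rightarrow> complex) \<Rightarrow> complex^'n^'n" where
  "spectral_sum n P c = (\<Sum>j<n. cscale (c j) (P j))"

definition schur_mult ::
  "nat \<Rightarrow> (nat \<Rightarrow> nat \<Rightarrow> complex) \<Rightarrow> (nat \<Rightarrow> complex^'n::finite^'n) \<Rightarrow> complex^'n^'n \<Rightarrow> complex^'n^'n" where
  "schur_mult n g P X = (\<Sum>j<n. \<Sum>k<n. cscale (g j k) (P j ** X ** P k))"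

lemma schur_mult_cong:
  "(\<And>j k. j < n \<Longrightarrow> k < n \<Longrightarrow> g j k = h j k) \<Longrightarrow> schur_mult n g P X = schur_mult n h P X"
  unfolding schur_mult_def by (intro sum.cong refl) auto

lemma bounded_linear_schur_mult: "bounded_linear (schur_mult n g P)"
proof -
  have "bounded_linear (\<lambda>X. cscale (g j k) ((P j ** X) ** P k))" for j k
    by (intro bounded_linear_compose[OF bounded_linear_cscale_right]
        bounded_linear_compose[OF bounded_bilinear.bounded_linear_left[OF bounded_bilinear_matrix_mult]]
        bounded_bilinear.bounded_linear_right[OF bounded_bilinear_matrix_mult])
  then show ?thesis
    unfolding schur_mult_def[abs_def] by (intro bounded_linear_sum)
qed

lemma schur_mult_add: "schur_mult n g P X + schur_mult n h P X = schur_mult n (\<lambda>j k. g j k + h j k) P X"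
  by (simp add: schur_mult_def cscale_add_left flip: sum.distrib)

lemma scaleR_schur_mult: "r *\<^sub>R schur_mult n g P X = schur_mult n (\<lambda>j k. r *\<^sub>R g j k) P X"
  by (simp add: schur_mult_def scaleR_sum_right scaleR_cscale)

lemma scaleR_spectral_sum: "r *\<^sub>R spectral_sum n P c = spectral_sum n P (\<lambda>j. r *\<^sub>R c j)"
  by (simp add: spectral_sum_def scaleR_sum_right scaleR_cscale)

lemma schur_mult_sums:
  assumes "\<And>j k. j < n \<Longrightarrow> k < n \<Longrightarrow> (\<lambda>i. g i j k) sums s j k"
  shows "(\<lambda>i. schur_mult n (g i) P X) sums schur_mult n s P X"
  unfolding schur_mult_def by (intro sums_sum bounded_linear.sums[OF bounded_linear_cscale_left] assms) auto

lemma spectral_sum_sums: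
  assumes "\<And>j. j < n \<Longrightarrow> (\<lambda>i. c i j) sums s j"
  shows "(\<lambda>i. spectral_sum n P (c i)) sums spectral_sum n P s"
  unfolding spectral_sum_def by (intro sums_sum bounded_linear.sums[OF bounded_linear_cscale_left] assms) auto

lemma dcl_eq_schur_mult: "dcl n a P = schur_mult n (ell a) P"
  by (simp add: fun_eq_iff dcl_def schur_mult_def)

lemma dcr_eq_schur_mult: "dcr n a P = schur_mult n (\<lambda>j k. ell a k j) P"
  by (simp add: fun_eq_iff dcr_def schur_mult_def)

lemma cml_eq_schur_mult: "cml n a P = schur_mult n (\<lambda>j k. 1 / ell a j k) P"
  by (simp add: fun_eq_iff cml_def schur_mult_def)

lemma cmr_eq_schur_mult: "cmr n a P = schur_mult n (\<lambda>j k. 1 / ell a k j) P"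
  by (simp add: fun_eq_iff cmr_def schur_mult_def)

lemma ell_eq_if_inj:
  assumes "inj_on a {..<n}" and "j < n" and "k < n"
  shows "ell a j k = (if a j = a k then 1 else (exp (a j - a k) - 1) / (a j - a k))"
  using inj_onD[OF assms(1)] assms(2,3) by (auto simp: ell_def)

lemma ell_nonzero:
  assumes "inj_on a {..<n}" and "j < n" and "k < n" and "j \<noteq> k \<Longrightarrow> exp (a j - a k) \<noteq> 1"
  shows "ell a j k \<noteq> 0"
  using inj_onD[OF assms(1)] assms(2-4) by (auto simp: ell_def)

locale resolution_of_identity =
  fixes n :: nat and P :: "nat \<Rightarrow> complex^'n::finite^'n"
  assumes proj_mult_proj: "\<And>i j. i < n \<Longrightarrow> j < n \<Longrightarrow> P i ** P j = (if i = j then P i else 0)"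
    and sum_proj: "(\<Sum>j<n. P j) = mat 1"
begin

lemma proj_mult_spectral_sum:
  assumes "j < n"
  shows "P j ** spectral_sum n P c = cscale (c j) (P j)"
proof -
  have "P j ** spectral_sum n P c = (\<Sum>i<n. if i = j then cscale (c j) (P j) else 0)"
    unfolding spectral_sum_def matrix_mult_sum_right cscale_matrix_mult_right
    by (rule sum.cong) (auto simp: proj_mult_proj assms)
  then show ?thesis
    using assms by simp
qed

lemma spectral_sum_mult_proj:
  assumes "j < n"
  shows "spectral_sum n P c ** P j = cscale (c j) (P j)"
proof -
  have "spectral_sum n P c ** P j = (\<Sum>i<n. if i = j then cscale (c j) (P j) else 0)"
    unfolding spectral_sum_def matrix_mult_sum_left cscale_matrix_mult_left
    by (rule sum.cong) (auto simp: proj_mult_proj assms)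
  then show ?thesis
    using assms by simp
qed

lemma spectral_sum_mult: "spectral_sum n P c ** spectral_sum n P d = spectral_sum n P (\<lambda>j. c j * d j)"
  unfolding spectral_sum_def[of n P d] spectral_sum_def[of n P "\<lambda>j. c j * d j"]
  by (simp add: matrix_mult_sum_right cscale_matrix_mult_right spectral_sum_mult_proj cscale_cscale mult.commute)

lemma spectral_sum_one: "spectral_sum n P (\<lambda>_. 1) = mat 1"
  by (simp add: spectral_sum_def sum_proj)

lemma proj_eq_spectral_sum: "j < n \<Longrightarrow> P j = spectral_sum n P (\<lambda>i. if i = j then 1 else 0)"
  by (simp add: spectral_sum_def if_distrib[of "\<lambda>c. cscale c _"] cong: if_cong)

lemma spectral_sum_mult_schur_mult:
  "spectral_sum n P c ** schur_mult n g P X = schur_mult n (\<lambda>j k. c j * g j k) P X"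
  unfolding schur_mult_def
  by (simp add: matrix_mult_sum_right cscale_matrix_mult_right matrix_mul_assoc cscale_matrix_mult_left
      spectral_sum_mult_proj cscale_cscale mult.commute)

lemma schur_mult_mult_spectral_sum:
  "schur_mult n g P X ** spectral_sum n P c = schur_mult n (\<lambda>j k. g j k * c k) P X"
  unfolding schur_mult_def
  by (simp add: matrix_mult_sum_left cscale_matrix_mult_left cscale_matrix_mult_right
      proj_mult_spectral_sum cscale_cscale mult.commute flip: matrix_mul_assoc)

lemma schur_mult_one: "schur_mult n (\<lambda>_ _. 1) P X = X"
proof -
  have "schur_mult n (\<lambda>_ _. 1) P X = (\<Sum>j<n. P j) ** X ** (\<Sum>k<n. P k)"
    by (simp add: schur_mult_def matrix_mult_sum_left matrix_mult_sum_right) (rule sum.swap)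
  then show ?thesis
    by (simp add: sum_proj)
qed

lemma proj_mult_schur_mult_mult_proj:
  assumes "j < n" and "k < n"
  shows "P j ** schur_mult n h P X ** P k = cscale (h j k) (P j ** X ** P k)"
proof -
  have coeff: "cscale ((if j' = j then 1 else 0) * h j' k' * (if k' = k then 1 else 0)) M
      = (if k' = k then if j' = j then cscale (h j k) M else 0 else 0)" for j' k' M
    by simp
  have "P j ** schur_mult n h P X ** P k
      = spectral_sum n P (\<lambda>i. if i = j then 1 else 0) ** schur_mult n h P X
          ** spectral_sum n P (\<lambda>i. if i = k then 1 else 0)"
    using assms by (simp flip: proj_eq_spectral_sum)
  also have "\<dots> = schur_mult n (\<lambda>j' k'. (if j' = j then 1 else 0) * h j' k' * (if k' = k then 1 else 0)) P X"
    by (simp only: spectral_sum_mult_schur_mult schur_mult_mult_spectral_sum)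
  also have "\<dots> = cscale (h j k) (P j ** X ** P k)"
    using assms by (simp add: schur_mult_def coeff)
  finally show ?thesis .
qed

lemma schur_mult_schur_mult: "schur_mult n g P (schur_mult n h P X) = schur_mult n (\<lambda>j k. g j k * h j k) P X"
  unfolding schur_mult_def[of n g] schur_mult_def[of n "\<lambda>j k. g j k * h j k"]
  by (intro sum.cong refl) (simp add: proj_mult_schur_mult_mult_proj cscale_cscale)

lemma matpow_spectral_sum: "matpow (spectral_sum n P a) k = spectral_sum n P (\<lambda>j. a j ^ k)"
  by (induction k) (simp_all add: spectral_sum_one spectral_sum_mult)

lemma mexp_spectral_sum: "mexp (spectral_sum n P a) = spectral_sum n P (\<lambda>j. exp (a j))"
proof -
  have "(\<lambda>k. spectral_sum n P (\<lambda>j. (1 / fact k) *\<^sub>R a j ^ k)) sums spectral_sum n P (\<lambda>j. exp (a j))"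
    by (intro spectral_sum_sums) (use exp_converges in \<open>simp add: divide_inverse\<close>)
  then have "(\<lambda>k. (1 / fact k) *\<^sub>R matpow (spectral_sum n P a) k) sums spectral_sum n P (\<lambda>j. exp (a j))"
    by (simp add: matpow_spectral_sum scaleR_spectral_sum)
  then show ?thesis
    using mexp_sums sums_unique2 by blast
qed

lemma matpow_deriv_spectral_sum:
  "matpow_deriv (spectral_sum n P a) X k = schur_mult n (\<lambda>j l. pow_divdiff k (a j) (a l)) P X"
proof (induction k)
  case 0
  then show ?case
    by (simp add: schur_mult_def)
next
  case (Suc k)
  have "X ** matpow (spectral_sum n P a) k = schur_mult n (\<lambda>j l. a l ^ k) P X"
    using schur_mult_mult_spectral_sum[of "\<lambda>_ _. 1" X "\<lambda>j. a j ^ k"]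
    by (simp add: schur_mult_one matpow_spectral_sum)
  then show ?case
    by (simp add: Suc spectral_sum_mult_schur_mult schur_mult_add)
qed

lemma mexp_deriv_spectral_sum:
  "mexp_deriv (spectral_sum n P a) X = schur_mult n (\<lambda>j l. exp_divdiff (a j) (a l)) P X"
proof -
  have "(\<lambda>k. schur_mult n (\<lambda>j l. (1 / fact k) *\<^sub>R pow_divdiff k (a j) (a l)) P X)
      sums schur_mult n (\<lambda>j l. exp_divdiff (a j) (a l)) P X"
    by (intro schur_mult_sums pow_divdiff_sums)
  then have "(\<lambda>k. (1 / fact k) *\<^sub>R matpow_deriv (spectral_sum n P a) X k)
      sums schur_mult n (\<lambda>j l. exp_divdiff (a j) (a l)) P X"
    by (simp add: matpow_deriv_spectral_sum scaleR_schur_mult)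
  then show ?thesis
    using mexp_deriv_sums sums_unique2 by blast
qed

lemma mexp_deriv_eq_dcl_mult_mexp:
  assumes "inj_on a {..<n}"
  shows "mexp_deriv (spectral_sum n P a) X = dcl n a P X ** mexp (spectral_sum n P a)"
  unfolding dcl_eq_schur_mult mexp_deriv_spectral_sum mexp_spectral_sum schur_mult_mult_spectral_sum
  by (rule schur_mult_cong) (simp add: ell_eq_if_inj[OF assms] exp_divdiff_eq_left)

lemma mexp_deriv_eq_mexp_mult_dcr:
  assumes "inj_on a {..<n}"
  shows "mexp_deriv (spectral_sum n P a) X = mexp (spectral_sum n P a) ** dcr n a P X"
  unfolding dcr_eq_schur_mult mexp_deriv_spectral_sum mexp_spectral_sum spectral_sum_mult_schur_mult
  by (rule schur_mult_cong) (simp add: ell_eq_if_inj[OF assms] exp_divdiff_eq_right)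

lemma dcl_cml:
  assumes "\<And>j k. j < n \<Longrightarrow> k < n \<Longrightarrow> ell a j k \<noteq> 0"
  shows "dcl n a P (cml n a P X) = X"
  unfolding dcl_eq_schur_mult cml_eq_schur_mult schur_mult_schur_mult
  by (simp add: assms schur_mult_cong[where h="\<lambda>_ _. 1"] schur_mult_one)

lemma dcr_cmr:
  assumes "\<And>j k. j < n \<Longrightarrow> k < n \<Longrightarrow> ell a j k \<noteq> 0"
  shows "dcr n a P (cmr n a P X) = X"
  unfolding dcr_eq_schur_mult cmr_eq_schur_mult schur_mult_schur_mult
  by (simp add: assms schur_mult_cong[where h="\<lambda>_ _. 1"] schur_mult_one)

end

theorem theorem1:
  fixes A :: "complex^'m::finite^'m" and n :: nat
    and a :: "nat \<Rightarrow> complex" and P :: "nat \<Rightarrow> complex^'m^'m"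
  assumes distinct: "inj_on a {..<n}"
    and nonzero: "\<And>j. j < n \<Longrightarrow> P j \<noteq> 0"
    and proj: "\<And>i j. i < n \<Longrightarrow> j < n \<Longrightarrow> P i ** P j = (if i = j then P i else 0)"
    and complete: "(\<Sum>j<n. P j) = mat 1"
    and decomp: "A = (\<Sum>j<n. cscale (a j) (P j))"
  shows "bigO_sq (\<lambda>B. mexp (A + B) - mexp (dcl n a P B) ** mexp A)
         \<and> bigO_sq (\<lambda>B. mexp (A + B) - mexp A ** mexp (dcr n a P B))
         \<and> ((\<forall>j<n. \<forall>k<n. j \<noteq> k \<longrightarrow> exp (a j - a k) \<noteq> 1) \<longrightarrow>
              bigO_sq (\<lambda>B. mexp B ** mexp A - mexp (A + cml n a P B))
            \<and> bigO_sq (\<lambda>B. mexp A ** mexp B - mexp (A + cmr n a P B)))"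
proof -
  interpret resolution_of_identity n P
    using proj complete by unfold_locales
  have A: "A = spectral_sum n P a"
    by (simp add: decomp spectral_sum_def)
  have lin: "bounded_linear (dcl n a P)" "bounded_linear (dcr n a P)"
    "bounded_linear (cml n a P)" "bounded_linear (cmr n a P)"
    by (simp_all add: dcl_eq_schur_mult dcr_eq_schur_mult cml_eq_schur_mult cmr_eq_schur_mult
        bounded_linear_schur_mult)
  note deriv_dcl = mexp_deriv_eq_dcl_mult_mexp[OF distinct, folded A]
  note deriv_dcr = mexp_deriv_eq_mexp_mult_dcr[OF distinct, folded A]
  have cm_inverse: "dcl n a P (cml n a P X) = X" "dcr n a P (cmr n a P X) = X"
    if "\<forall>j<n. \<forall>k<n. j \<noteq> k \<longrightarrow> exp (a j - a k) \<noteq> 1" for X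
    using that by (simp_all add: dcl_cml dcr_cmr ell_nonzero[OF distinct])
  show ?thesis
    by (intro conjI impI bigO_sq_mexp_add_decompose_left[OF lin(1) deriv_dcl]
        bigO_sq_mexp_add_decompose_right[OF lin(2) deriv_dcr]
        bigO_sq_mexp_mult_compose_left[OF lin(3)] bigO_sq_mexp_mult_compose_right[OF lin(4)])
      (simp_all add: deriv_dcl[of "cml n a P X" for X] deriv_dcr[of "cmr n a P X" for X] cm_inverse)
qed

end
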